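(* Fix $N\in\mathbb{N}_+$. Consider all triples $(N_1,N_2,\lambda)\in\mathbb{N}^3$ with $N_1+N_2\geq1$ such that the symmetric nested array $\mathcal{D}=\mathcal{G}\cup(\max\mathcal{G}-\mathcal{G}+\lambda)$, with $\mathcal{G}=\mathcal{G}_{\mathrm{NA}}(N_1,N_2)$, satisfies $|\mathcal{D}|=N$ and $\mathcal{D}+\mathcal{D}=\{0,\ldots,2\max\mathcal{D}\}$. Among such triples, there is one maximizing the aperture $\max\mathcal{D}$ for which $\mathcal{D}=\mathcal{D}_{\mathrm{CNA}}(N_1',N_2')$ for some $N_1',N_2'\in\mathbb{N}$.
   Context: For $a\in\mathbb{Z}$, $b\in\mathbb{N}_+$, $c\in\mathbb{Z}$, $\{a:b:c\}=\{a,a+b,\ldots\}\cap(-\infty,c]$ (empty if $c<a$), and $\{a:c\}=\{a:1:c\}$. Set sums/differences are elementwise: $\mathcal{A}+\mathcal{B}=\{a+b\}$, $\mathcal{A}+c=\{a+c\}$, $c-\mathcal{A}=\{c-a\}$. For $N_1,N_2\in\mathbb{N}$ let $\mathcal{D}_1=\{0:N_1-1\}$ and $\mathcal{D}_2=\{0:N_1+1:(N_2-1)(N_1+1)\}$. The Nested Array is $\mathcal{G}_{\mathrm{NA}}(N_1,N_2)=\mathcal{D}_1\cup(\mathcal{D}_2+N_1)$. The Concatenated Nested Array is $\mathcal{D}_{\mathrm{CNA}}(N_1,N_2)=\mathcal{D}_1\cup(\mathcal{D}_2+N_1)\cup(\mathcal{D}_1+N_2(N_1+1))$. *)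

theory Defs
  imports Main
begin

text \<open>Arithmetic progression set {a:b:c} = {a, a+b, ...} \<inter> (-\<infinity>, c] (empty if c < a).\<close>
definition apset :: "int \<Rightarrow> int \<Rightarrow> int \<Rightarrow> int set" where
  "apset a b c = {a + int k * b | k. a + int k * b \<le> c}"

definition setplus :: "int set \<Rightarrow> int set \<Rightarrow> int set" where
  "setplus A B = {a + b | a b. a \<in> A \<and> b \<in> B}"

definition D1 :: "nat \<Rightarrow> int set" where
  "D1 N1 = apset 0 1 (int N1 - 1)"

definition D2 :: "nat \<Rightarrow> nat \<Rightarrow> int set" where
  "D2 N1 N2 = apset 0 (int N1 + 1) ((int N2 - 1) * (int N1 + 1))"

definition G_NA :: "nat \<Rightarrow> nat \<Rightarrow> int set" where
  "G_NA N1 N2 = D1 N1 \<union> ((\<lambda>x. x + int N1) ` D2 N1 N2)"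

definition D_CNA :: "nat \<Rightarrow> nat \<Rightarrow> int set" where
  "D_CNA N1 N2 = D1 N1 \<union> ((\<lambda>x. x + int N1) ` D2 N1 N2)
      \<union> ((\<lambda>x. x + int N2 * (int N1 + 1)) ` D1 N1)"

definition symNA :: "nat \<Rightarrow> nat \<Rightarrow> nat \<Rightarrow> int set" where
  "symNA N1 N2 lam = (let G = G_NA N1 N2 in G \<union> ((\<lambda>g. Max G - g + int lam) ` G))"

definition admissible :: "nat \<Rightarrow> nat \<times> nat \<times> nat \<Rightarrow> bool" where
  "admissible N t = (case t of (N1, N2, lam) \<Rightarrow>
      N1 + N2 \<ge> 1 \<and> card (symNA N1 N2 lam) = N \<and>
      setplus (symNA N1 N2 lam) (symNA N1 N2 lam) = {0 .. 2 * Max (symNA N1 N2 lam)})"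

end

theory Submission
  imports Defs
begin

text \<open>Write \<open>p = N\<^sub>1 + 1\<close>, \<open>L = N\<^sub>2 p - 1 = max G\<close> and
  \<open>f(a) = (N - 2a)(a + 1) + a - 1\<close>. The sum set \<open>G + G\<close> contains \<open>{0..L + N\<^sub>1}\<close> but,
  unless \<open>G\<close> is an interval, misses \<open>L + N\<^sub>1 + 1\<close>. Hence for \<open>\<lambda> = N\<^sub>1\<close> the symmetric
  array is a hole-free CNA with \<open>N = 2N\<^sub>1 + N\<^sub>2\<close> sensors and aperture \<open>f(N\<^sub>1)\<close>.
  Conversely a hole-free array forces \<open>\<lambda> \<le> L + N\<^sub>1 + 1\<close>, and counting disjoint pieces of
  \<open>G\<close> and of its reflection gives \<open>N \<ge> 2N\<^sub>1 + t\<close> for some \<open>t\<close> while the aperture is at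
  most \<open>t p + N\<^sub>1 - 1 \<le> f(N\<^sub>1)\<close>; an interval array has aperture \<open>N - 1 = f(0)\<close>. So the CNA
  maximising \<open>f\<close> is optimal.\<close>

lemma apset_0_1: "apset 0 1 c = {0..c}"
proof -
  have "x \<in> apset 0 1 c" if "x \<in> {0..c}" for x
    using that unfolding apset_def by (auto intro!: exI[of _ "nat x"])
  then show ?thesis unfolding apset_def by auto
qed

lemma D1_eq: "D1 n = {0..int n - 1}"
  unfolding D1_def by (simp add: apset_0_1)

lemma D2_eq: "D2 n1 n2 = (\<lambda>k. int k * (int n1 + 1)) ` {..<n2}"
proof -
  have "int k * (int n1 + 1) \<le> (int n2 - 1) * (int n1 + 1) \<longleftrightarrow> k < n2" for k
    by (subst mult_le_cancel_right_pos) auto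
  then show ?thesis unfolding D2_def apset_def by auto
qed

lemma G_NA_eq: "G_NA n1 n2 = {0..int n1 - 1} \<union> (\<lambda>k. int k * (int n1 + 1) + int n1) ` {..<n2}"
  unfolding G_NA_def D1_eq D2_eq by (simp add: image_image)

lemma G_NA_0_right: "G_NA n 0 = {0..int n - 1}"
  by (simp add: G_NA_eq)

lemma G_NA_1_right: "G_NA n 1 = {0..int n}"
  by (auto simp: G_NA_eq lessThan_Suc)

lemma G_NA_0_left: "G_NA 0 n = {0..int n - 1}"
proof -
  have "int ` {..<n} = {0..int n - 1}"
    by (auto simp: image_iff intro!: bexI[of _ "nat x" for x])
  then show ?thesis by (simp add: G_NA_eq)
qed

text \<open>The symmetric array depends on \<open>N1, N2\<close> only through the set \<open>G_NA N1 N2\<close>.\<close>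
lemma G_NA_normal_form:
  assumes "n1 + n2 \<ge> 1"
  obtains m1 m2 where "G_NA n1 n2 = G_NA m1 m2" "m2 \<ge> 1" "m1 = 0 \<longrightarrow> m2 = 1"
proof (cases "n1 \<ge> 1 \<and> n2 \<ge> 1")
  case True then show ?thesis by (intro that[of n1 n2]) auto
next
  case False
  then consider "n1 = 0" "n2 \<ge> 1" | "n2 = 0" "n1 \<ge> 1" using assms by linarith
  then have "G_NA n1 n2 = {0..int (n1 + n2 - 1)}"
    by cases (simp_all add: G_NA_0_left G_NA_0_right of_nat_diff)
  then have "G_NA n1 n2 = G_NA (n1 + n2 - 1) 1"
    by (simp only: G_NA_1_right)
  then show ?thesis by (intro that) auto
qed

lemma symNA_cong: "G_NA n1 n2 = G_NA m1 m2 \<Longrightarrow> symNA n1 n2 lam = symNA m1 m2 lam"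
  unfolding symNA_def by simp

lemma setplus_mono: "A \<subseteq> A' \<Longrightarrow> B \<subseteq> B' \<Longrightarrow> setplus A B \<subseteq> setplus A' B'"
  unfolding setplus_def by blast

lemma setplus_symmetric_eq:
  fixes D :: "int set"
  assumes sub: "D \<subseteq> {0..M}" and sym: "\<And>x. x \<in> D \<Longrightarrow> M - x \<in> D"
    and low: "{0..M} \<subseteq> setplus D D"
  shows "setplus D D = {0..2*M}"
proof
  show "setplus D D \<subseteq> {0..2*M}"
  proof
    fix x assume "x \<in> setplus D D"
    then obtain a b where "x = a + b" "a \<in> {0..M}" "b \<in> {0..M}"
      using sub unfolding setplus_def by blast
    then show "x \<in> {0..2*M}" by simp
  qed
  show "{0..2*M} \<subseteq> setplus D D"
  proof
    fix x assume x: "x \<in> {0..2*M}"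
    show "x \<in> setplus D D"
    proof (cases "x \<le> M")
      case True then show ?thesis using low x by auto
    next
      case False
      then have "2*M - x \<in> setplus D D" using low x by auto
      then obtain a b where ab: "2*M - x = a + b" "a \<in> D" "b \<in> D" unfolding setplus_def by auto
      then have "x = (M - a) + (M - b)" by simp
      then show ?thesis using sym ab unfolding setplus_def by blast
    qed
  qed
qed

lemma image_reflect_atLeastAtMost:
  "(\<lambda>g. c - g + l) ` {a..b} = {c - b + l..c - a + (l::int)}"
proof -
  have "(\<lambda>g. c - g + l) ` {a..b} = (\<lambda>x. x + l) ` ((-) c ` {a..b})"
    by (simp only: image_image)
  then show ?thesis by simp
qed

lemma inj_arith_progression: "q \<noteq> 0 \<Longrightarrow> inj (\<lambda>k. int k * q + c)"
  by (auto simp: inj_def)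

lemma image_reverse_lessThan: "(\<lambda>k. m - 1 - k) ` {..<m} = {..<m::nat}"
proof
  show "{..<m} \<subseteq> (\<lambda>k. m - 1 - k) ` {..<m}"
  proof
    fix k assume "k \<in> {..<m}"
    then show "k \<in> (\<lambda>k. m - 1 - k) ` {..<m}" by (intro rev_image_eqI[of "m - 1 - k"]) auto
  qed
qed auto

definition cna_aperture :: "nat \<Rightarrow> nat \<Rightarrow> int" where
  "cna_aperture N a = (int N - 2 * int a) * (int a + 1) + int a - 1"

lemma le_cna_aperture:
  assumes "2 * a + t \<le> N" and "M \<le> int t * (int a + 1) + int a - 1"
  shows "M \<le> cna_aperture N a"
proof -
  have "int t * (int a + 1) \<le> (int N - 2 * int a) * (int a + 1)"
    using assms(1) by (intro mult_right_mono) auto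
  then show ?thesis using assms(2) unfolding cna_aperture_def by linarith
qed

text \<open>\<open>A\<close> and \<open>B\<close> are the paper's \<open>\<D>\<^sub>1\<close> and \<open>\<D>\<^sub>2 + N\<^sub>1\<close>, \<open>A'\<close> and \<open>B'\<close> their
  images under the reflection \<open>g \<mapsto> L + \<lambda> - g\<close>, where \<open>L = max G\<close>.\<close>
locale nested_array =
  fixes n1 n2 lam :: nat
  assumes n2_pos: "n2 \<ge> 1"
begin

abbreviation p :: int where "p \<equiv> int n1 + 1"

abbreviation L :: int where "L \<equiv> int n2 * p - 1"

definition A :: "int set" where "A = {0..int n1 - 1}"

definition B :: "int set" where "B = (\<lambda>k. int k * p + int n1) ` {..<n2}"

definition A' :: "int set" where "A' = {L + int lam - int n1 + 1..L + int lam}"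

definition B' :: "int set" where "B' = (\<lambda>k. int k * p + int lam) ` {..<n2}"

lemma G_NA_eq_A_B: "G_NA n1 n2 = A \<union> B"
  unfolding G_NA_eq A_def B_def ..

lemma finite_A_B [simp]: "finite A" "finite B" "finite A'" "finite B'"
  unfolding A_def B_def A'_def B'_def by auto

lemma card_A_B [simp]: "card A = n1" "card B = n2" "card A' = n1" "card B' = n2"
  unfolding A_def B_def A'_def B'_def
  by (auto simp: card_image inj_on_subset[OF inj_arith_progression])

lemma A_bounds: "x \<in> A \<Longrightarrow> 0 \<le> x \<and> x < int n1"
  unfolding A_def by auto

lemma B_bounds:
  assumes "x \<in> B" shows "int n1 \<le> x \<and> x \<le> L"
proof -
  obtain k where k: "k < n2" "x = int k * p + int n1" using assms unfolding B_def by auto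
  have "int k * p \<le> (int n2 - 1) * p" using k by (intro mult_right_mono) auto
  then show ?thesis using k by (simp add: algebra_simps)
qed

lemma A'_bounds: "x \<in> A' \<Longrightarrow> L + int lam - int n1 < x \<and> x \<le> L + int lam"
  unfolding A'_def by auto

lemma B'_bounds:
  assumes "x \<in> B'" shows "int lam \<le> x \<and> x \<le> L + int lam - int n1"
proof -
  obtain k where k: "k < n2" "x = int k * p + int lam" using assms unfolding B'_def by auto
  have "int k * p \<le> (int n2 - 1) * p" using k by (intro mult_right_mono) auto
  then show ?thesis using k by (simp add: algebra_simps)
qed

lemma L_ge: "int n1 \<le> L"
proof -
  have "p \<le> int n2 * p" using n2_pos mult_right_mono[of 1 "int n2" p] by simp
  then show ?thesis by linarith
qed

lemma interval_subset_G_NA: "{0..int n1} \<subseteq> G_NA n1 n2"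
proof
  fix x assume "x \<in> {0..int n1}"
  moreover have "int n1 \<in> B" unfolding B_def using n2_pos by (intro rev_image_eqI[of 0]) auto
  ultimately show "x \<in> G_NA n1 n2" unfolding G_NA_eq_A_B A_def by (cases "x = int n1") auto
qed

lemma L_in_B: "L \<in> B"
proof -
  have "L = int (n2 - 1) * p + int n1" using n2_pos by (simp add: of_nat_diff algebra_simps)
  then show ?thesis unfolding B_def using n2_pos by (intro rev_image_eqI[of "n2 - 1"]) auto
qed

lemma Max_G_NA: "Max (G_NA n1 n2) = L"
  using L_in_B A_bounds B_bounds L_ge unfolding G_NA_eq_A_B
  by (intro Max_eqI) fastforce+

lemma mirror_A: "(\<lambda>g. L - g + int lam) ` A = A'"
  unfolding A_def A'_def image_reflect_atLeastAtMost by (simp add: algebra_simps)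

lemma mirror_B: "(\<lambda>g. L - g + int lam) ` B = B'"
proof -
  have "L - (int k * p + int n1) + int lam = int (n2 - 1 - k) * p + int lam" if "k < n2" for k
    using that by (simp add: of_nat_diff algebra_simps)
  then have "(\<lambda>g. L - g + int lam) ` B = (\<lambda>k. int k * p + int lam) ` (\<lambda>k. n2 - 1 - k) ` {..<n2}"
    unfolding B_def image_image by (intro image_cong) auto
  then show ?thesis unfolding image_reverse_lessThan B'_def .
qed

abbreviation D :: "int set" where "D \<equiv> symNA n1 n2 lam"

lemma symNA_eq_G_NA: "D = G_NA n1 n2 \<union> (\<lambda>g. L - g + int lam) ` G_NA n1 n2"
  unfolding symNA_def Let_def Max_G_NA ..

lemma symNA_eq: "D = A \<union> B \<union> A' \<union> B'"
  unfolding symNA_eq_G_NA G_NA_eq_A_B image_Un mirror_A mirror_B by auto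

lemma finite_symNA: "finite D"
  unfolding symNA_eq by simp

lemma symNA_subset: "D \<subseteq> {0..L + int lam}"
  using A_bounds B_bounds A'_bounds B'_bounds L_ge unfolding symNA_eq by fastforce

lemma symNA_reflect: "x \<in> D \<Longrightarrow> L + int lam - x \<in> D"
  unfolding symNA_eq_G_NA by force

lemma Max_symNA: "Max D = L + int lam"
proof (rule Max_eqI[OF finite_symNA])
  show "L + int lam \<in> D"
    using symNA_reflect[of 0] interval_subset_G_NA unfolding symNA_eq_G_NA by force
qed (use symNA_subset in auto)

lemma setplus_G_NA_interval: "{0..L + int n1} \<subseteq> setplus (G_NA n1 n2) (G_NA n1 n2)"
proof
  fix x assume x: "x \<in> {0..L + int n1}"
  have small: "y \<in> G_NA n1 n2" if "0 \<le> y" "y \<le> int n1" for y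
    using that interval_subset_G_NA by auto
  show "x \<in> setplus (G_NA n1 n2) (G_NA n1 n2)"
  proof (cases "x < int n1")
    case True
    then have "x = x + 0" "x \<in> G_NA n1 n2" "0 \<in> G_NA n1 n2" using x small by auto
    then show ?thesis unfolding setplus_def by blast
  next
    case False
    define k where "k = (x - int n1) div p"
    define r where "r = (x - int n1) mod p"
    have x_eq: "x = (k * p + int n1) + r"
      unfolding k_def r_def using div_mult_mod_eq[of "x - int n1" p] by linarith
    have r: "0 \<le> r" "r \<le> int n1" unfolding r_def using pos_mod_bound[of p "x - int n1"] by auto
    have k0: "0 \<le> k" unfolding k_def using False by (simp add: pos_imp_zdiv_nonneg_iff)
    have "x \<le> L + int n1" using x by simp
    then have "k * p < int n2 * p" using x_eq r by linarith
    then have "nat k < n2" using k0 mult_less_cancel_right_pos[of p k "int n2"] by simp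
    then have "k * p + int n1 \<in> B" unfolding B_def using k0 by (intro rev_image_eqI[of "nat k"]) auto
    then show ?thesis using x_eq small[OF r] unfolding G_NA_eq_A_B setplus_def by blast
  qed
qed

text \<open>The hypothesis only excludes \<open>G_NA 0 n2\<close> with \<open>n2 \<ge> 2\<close>, an interval whose
  sum set has no gap.\<close>
lemma setplus_G_NA_gap:
  assumes "n1 = 0 \<longrightarrow> n2 = 1"
  shows "L + int n1 + 1 \<notin> setplus (G_NA n1 n2) (G_NA n1 n2)"
proof
  assume "L + int n1 + 1 \<in> setplus (G_NA n1 n2) (G_NA n1 n2)"
  then obtain y z where yz: "y + z = int n2 * p + int n1" "y \<in> A \<union> B" "z \<in> A \<union> B"
    unfolding setplus_def G_NA_eq_A_B by auto
  have not_A_B: False if y': "y' \<in> A" and z': "z' \<in> B"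
    and sum: "y' + z' = int n2 * p + int n1" for y' z'
  proof -
    obtain k where k: "k < n2" "z' = int k * p + int n1" using z' unfolding B_def by auto
    have "int k * p + p \<le> int n2 * p"
      using k mult_right_mono[of "int k + 1" "int n2" p] by (simp add: algebra_simps)
    then show False using y' sum k A_bounds by force
  qed
  consider "y \<in> A" "z \<in> A" | "y \<in> A" "z \<in> B" | "y \<in> B" "z \<in> A" | "y \<in> B" "z \<in> B"
    using yz by blast
  then show False
  proof cases
    case 1 then show False using yz(1) A_bounds[OF 1(1)] A_bounds[OF 1(2)] L_ge by linarith
  next
    case 2 then show False using not_A_B yz(1) by blast
  next
    case 3 then show False using not_A_B[of z y] yz(1) by (simp add: add.commute)
  next
    case 4
    then obtain k k' where "y = int k * p + int n1" "z = int k' * p + int n1"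
      unfolding B_def by auto
    then have "int n1 = (int n2 - int k - int k') * p" using yz(1) by (simp add: algebra_simps)
    then have "p dvd int n1" by (metis dvd_triv_right)
    then have "n1 = 0" using zdvd_imp_le[of p "int n1"] by fastforce
    then show False using assms 4 yz(1) unfolding B_def by auto
  qed
qed

lemma setplus_symNA_full:
  assumes "lam \<le> n1"
  shows "setplus D D = {0..2 * Max D}"
  unfolding Max_symNA
proof (rule setplus_symmetric_eq[OF symNA_subset symNA_reflect])
  have "{0..L + int lam} \<subseteq> setplus (G_NA n1 n2) (G_NA n1 n2)"
    using setplus_G_NA_interval assms by force
  also have "\<dots> \<subseteq> setplus D D"
    by (rule setplus_mono) (auto simp: symNA_eq_G_NA)
  finally show "{0..L + int lam} \<subseteq> setplus D D" .
qed

lemma symNA_eq_D_CNA: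
  assumes "lam = n1"
  shows "D = A \<union> B \<union> A'" and "D = D_CNA n1 n2"
proof -
  have "B' = B" unfolding B_def B'_def using assms by simp
  then show D_eq: "D = A \<union> B \<union> A'"
    unfolding symNA_eq by auto
  have "(\<lambda>x. x + int n2 * (int n1 + 1)) ` D1 n1 = A'"
    unfolding D1_eq A'_def using assms by (simp add: algebra_simps)
  then show "D = D_CNA n1 n2"
    unfolding D_eq D_CNA_def G_NA_def[symmetric] G_NA_eq_A_B by simp
qed

lemma disjoint_parts:
  assumes "n1 \<le> lam"
  shows "A \<inter> B = {}" "(A \<union> B) \<inter> A' = {}" "A \<inter> B' = {}" "A' \<inter> B' = {}"
  using A_bounds B_bounds A'_bounds B'_bounds L_ge assms by fastforce+

lemma card_symNA_D_CNA:
  assumes "lam = n1" shows "card D = 2 * n1 + n2"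
proof -
  have "n1 \<le> lam" using assms by simp
  then show ?thesis
    unfolding symNA_eq_D_CNA(1)[OF assms] using disjoint_parts by (simp add: card_Un_disjoint)
qed

lemma symNA_interval:
  assumes "n2 = 1" "lam \<le> n1"
  shows "D = {0..int n1 + int lam}"
proof -
  have G: "G_NA n1 n2 = {0..int n1}" unfolding assms(1) by (rule G_NA_1_right)
  have "L = int n1" using assms(1) by simp
  then have "D = {0..int n1} \<union> (\<lambda>g. int n1 - g + int lam) ` {0..int n1}"
    unfolding symNA_eq_G_NA G by simp
  also have "\<dots> = {0..int n1} \<union> {int lam..int n1 + int lam}"
    unfolding image_reflect_atLeastAtMost by simp
  also have "\<dots> = {0..int n1 + int lam}" using assms(2) by auto
  finally show ?thesis .
qed

lemma B_B'_disjoint: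
  assumes "\<not> p dvd (int lam - int n1)"
  shows "B \<inter> B' = {}"
proof -
  have False if "int k * p + int n1 = int j * p + int lam" for k j
  proof -
    have "int lam - int n1 = (int k - int j) * p" using that by (simp add: algebra_simps)
    then show False using assms by (metis dvd_triv_right)
  qed
  then show ?thesis unfolding B_def B'_def by blast
qed

lemma lam_le_of_full_sumset:
  assumes gap: "n1 = 0 \<longrightarrow> n2 = 1" and full: "setplus D D = {0..2 * Max D}"
  shows "int lam \<le> L + int n1 + 1"
proof (rule ccontr)
  assume "\<not> ?thesis"
  then have lt: "L + int n1 + 1 < int lam" by simp
  have below_lam: "x \<in> G_NA n1 n2" if "x \<in> D" "x < int lam" for x
    using that A'_bounds B'_bounds L_ge unfolding symNA_eq G_NA_eq_A_B by fastforce
  have "L + int n1 + 1 \<in> setplus D D" unfolding full Max_symNA using lt L_ge by simp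
  then obtain y z where yz: "L + int n1 + 1 = y + z" "y \<in> D" "z \<in> D"
    unfolding setplus_def by blast
  then have "0 \<le> y" "0 \<le> z" using symNA_subset by auto
  then have "y \<in> G_NA n1 n2" "z \<in> G_NA n1 n2" using yz lt below_lam by auto
  then have "L + int n1 + 1 \<in> setplus (G_NA n1 n2) (G_NA n1 n2)"
    unfolding setplus_def using yz(1) by blast
  then show False using setplus_G_NA_gap[OF gap] by blast
qed

lemma card_symNA_lower:
  assumes "n1 \<le> lam" "X \<subseteq> B'" "X \<inter> B = {}"
  shows "2 * n1 + n2 + card X \<le> card D"
proof -
  have fin: "finite X" by (rule finite_subset[OF assms(2)]) simp
  have "(A \<union> B \<union> A') \<inter> X = {}" using disjoint_parts[OF assms(1)] assms(2,3) by blast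
  then have "card (A \<union> B \<union> A' \<union> X) = 2 * n1 + n2 + card X"
    using disjoint_parts[OF assms(1)] fin by (simp add: card_Un_disjoint)
  moreover have "A \<union> B \<union> A' \<union> X \<subseteq> D" using assms(2) unfolding symNA_eq by blast
  ultimately show ?thesis using card_mono[OF finite_symNA] by metis
qed

lemma card_symNA_multiple:
  assumes "int lam = int n1 + int q * p" and "q \<le> n2"
  shows "2 * n1 + n2 + q \<le> card D"
proof -
  define X where "X = (\<lambda>k. int k * p + int lam) ` {n2 - q..<n2}"
  have "L < x" if x: "x \<in> X" for x
  proof -
    obtain k where k: "n2 - q \<le> k" "x = int k * p + int lam" using x unfolding X_def by auto
    have "int (n2 - q) * p \<le> int k * p" using k by (intro mult_right_mono) auto
    then show ?thesis using k assms by (simp add: of_nat_diff algebra_simps)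
  qed
  then have "X \<inter> B = {}" using B_bounds by fastforce
  moreover have "X \<subseteq> B'" unfolding X_def B'_def by auto
  moreover have "card X = q"
    unfolding X_def using assms(2) by (simp add: card_image inj_on_subset[OF inj_arith_progression])
  moreover have "n1 \<le> lam"
  proof -
    have "0 \<le> int q * p" by simp
    then show ?thesis using assms(1) by linarith
  qed
  ultimately show ?thesis using card_symNA_lower[of X] by simp
qed

lemma card_symNA_small_lam:
  assumes "lam < n1" "n2 \<ge> 2"
  shows "2 * n1 + n2 \<le> card D"
proof -
  \<comment> \<open>Here \<open>B \<inter> A' = {L}\<close>; the element \<open>p + \<lambda>\<close> of \<open>B'\<close> makes up for it.\<close>
  define y where "y = p + int lam"
  have below_L: "x \<le> L - p" if x: "x \<in> B" "x \<noteq> L" for x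
  proof -
    obtain k where k: "k < n2" "x = int k * p + int n1" using x(1) unfolding B_def by auto
    have "k \<noteq> n2 - 1"
    proof
      assume "k = n2 - 1"
      then have "x = L" using k n2_pos by (simp add: of_nat_diff algebra_simps)
      then show False using x(2) by simp
    qed
    then have "k + 1 \<le> n2 - 1" using k by linarith
    then have "int (k + 1) * p \<le> int (n2 - 1) * p" by (intro mult_right_mono) auto
    then show ?thesis using k n2_pos by (simp add: of_nat_diff algebra_simps)
  qed
  have "\<not> p dvd (int lam - int n1)"
    using assms(1) zdvd_imp_le[of p "int n1 - int lam"] by (auto simp: dvd_diff_commute)
  moreover have "y \<in> B'" unfolding y_def B'_def using assms(2) by (intro rev_image_eqI[of 1]) auto
  ultimately have "y \<notin> B" using B_B'_disjoint by blast
  moreover have "2 * p \<le> int n2 * p" using assms(2) by (intro mult_right_mono) auto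
  ultimately have disj: "A \<inter> (B - {L}) = {}" "(A \<union> (B - {L})) \<inter> A' = {}"
    "(A \<union> (B - {L}) \<union> A') \<inter> {y} = {}"
    using A_bounds B_bounds A'_bounds below_L assms(1) unfolding y_def by fastforce+
  have "card (A \<union> (B - {L}) \<union> A' \<union> {y}) = 2 * n1 + n2"
    using disj L_in_B n2_pos by (simp add: card_Un_disjoint)
  moreover have "A \<union> (B - {L}) \<union> A' \<union> {y} \<subseteq> D" using \<open>y \<in> B'\<close> unfolding symNA_eq by blast
  ultimately show ?thesis using card_mono[OF finite_symNA] by metis
qed

lemma sensors_vs_aperture:
  assumes gap: "n1 = 0 \<longrightarrow> n2 = 1" and full: "setplus D D = {0..2 * Max D}"
    and not_interval: "\<not> (lam < n1 \<and> n2 = 1)"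
  shows "\<exists>t \<ge> 1. 2 * n1 + t \<le> card D \<and> L + int lam \<le> int t * p + int n1 - 1"
proof -
  have lam_le: "int lam \<le> L + int n1 + 1" by (rule lam_le_of_full_sumset[OF gap full])
  consider (small) "lam < n1" | (coprime) "n1 \<le> lam" "\<not> p dvd (int lam - int n1)"
    | (multiple) q where "int lam - int n1 = p * q" "n1 \<le> lam"
    by (metis dvdE not_le)
  then show ?thesis
  proof cases
    case small
    then have "n2 \<ge> 2" using not_interval n2_pos by auto
    then show ?thesis using card_symNA_small_lam small by (intro exI[of _ n2]) auto
  next
    case coprime
    have "2 * n1 + n2 + card B' \<le> card D"
      using card_symNA_lower[OF coprime(1) order_refl] B_B'_disjoint[OF coprime(2)] by blast
    then show ?thesis using lam_le n2_pos by (intro exI[of _ "2 * n2"]) (auto simp: algebra_simps)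
  next
    case multiple
    have "0 \<le> p * q" using multiple by simp
    then have "0 \<le> q" by (simp add: zero_le_mult_iff)
    then obtain m where m: "q = int m" using nonneg_int_cases by blast
    have lam_eq: "int lam = int n1 + int m * p" using multiple m by (simp add: mult.commute)
    then have "int m * p \<le> int n2 * p" using lam_le by (simp add: algebra_simps)
    then have "m \<le> n2" by simp
    then have "2 * n1 + n2 + m \<le> card D" using card_symNA_multiple[OF lam_eq] by simp
    then show ?thesis using lam_eq n2_pos by (intro exI[of _ "n2 + m"]) (auto simp: algebra_simps)
  qed
qed

lemma aperture_bound:
  assumes gap: "n1 = 0 \<longrightarrow> n2 = 1" and full: "setplus D D = {0..2 * Max D}"
  shows "\<exists>a. 2 * a + 1 \<le> card D \<and> Max D \<le> cna_aperture (card D) a"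
proof (cases "lam < n1 \<and> n2 = 1")
  case True
  then have "D = {0..int n1 + int lam}" by (intro symNA_interval) auto
  moreover have "Max D = int n1 + int lam" using Max_symNA True by simp
  ultimately show ?thesis by (intro exI[of _ 0]) (simp add: cna_aperture_def)
next
  case False
  then obtain t where "t \<ge> 1" "2 * n1 + t \<le> card D" "Max D \<le> int t * p + int n1 - 1"
    using sensors_vs_aperture[OF gap full] Max_symNA by auto
  then show ?thesis using le_cna_aperture by (intro exI[of _ n1]) auto
qed

end

lemma admissible_aperture_bound:
  assumes "admissible N (n1, n2, lam)"
  shows "\<exists>a. 2 * a + 1 \<le> N \<and> Max (symNA n1 n2 lam) \<le> cna_aperture N a"
proof -
  have n: "n1 + n2 \<ge> 1" and card: "card (symNA n1 n2 lam) = N"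
    and full: "setplus (symNA n1 n2 lam) (symNA n1 n2 lam) = {0..2 * Max (symNA n1 n2 lam)}"
    using assms unfolding admissible_def by auto
  obtain m1 m2 where m: "G_NA n1 n2 = G_NA m1 m2" "m2 \<ge> 1" "m1 = 0 \<longrightarrow> m2 = 1"
    using G_NA_normal_form[OF n] .
  interpret nested_array m1 m2 lam by unfold_locales (rule m(2))
  show ?thesis
    using aperture_bound[OF m(3)] card full unfolding symNA_cong[OF m(1)] by simp
qed

lemma D_CNA_admissible:
  assumes "2 * a + 1 \<le> N"
  shows "admissible N (a, N - 2 * a, a)"
    and "Max (symNA a (N - 2 * a) a) = cna_aperture N a"
    and "symNA a (N - 2 * a) a = D_CNA a (N - 2 * a)"
proof -
  interpret nested_array a "N - 2 * a" a using assms by unfold_locales simp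
  show "admissible N (a, N - 2 * a, a)"
    unfolding admissible_def using assms card_symNA_D_CNA setplus_symNA_full by simp
  show "Max (symNA a (N - 2 * a) a) = cna_aperture N a"
    unfolding Max_symNA cna_aperture_def using assms by (simp add: of_nat_diff algebra_simps)
  show "symNA a (N - 2 * a) a = D_CNA a (N - 2 * a)"
    by (rule symNA_eq_D_CNA(2)) simp
qed

theorem mainTheorem6:
  fixes N :: nat
  assumes "N \<ge> 1"
  shows "\<exists>N1 N2 lam. admissible N (N1, N2, lam) \<and>
           (\<forall>M1 M2 mu. admissible N (M1, M2, mu) \<longrightarrow>
               Max (symNA M1 M2 mu) \<le> Max (symNA N1 N2 lam)) \<and>
           (\<exists>N1' N2'. symNA N1 N2 lam = D_CNA N1' N2')"
proof -
  let ?S = "{a. 2 * a + 1 \<le> N}"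
  have "finite ?S" by (rule finite_subset[of _ "{..N}"]) auto
  moreover have "0 \<in> ?S" using assms by simp
  ultimately have "Max (cna_aperture N ` ?S) \<in> cna_aperture N ` ?S"
    by (intro Max_in finite_imageI) blast+
  then obtain a where a: "2 * a + 1 \<le> N" "cna_aperture N a = Max (cna_aperture N ` ?S)" by auto
  have a_max: "cna_aperture N a' \<le> cna_aperture N a" if "2 * a' + 1 \<le> N" for a'
    using a(2) \<open>finite ?S\<close> that by simp
  show ?thesis
  proof (intro exI conjI allI impI)
    show "admissible N (a, N - 2 * a, a)" "symNA a (N - 2 * a) a = D_CNA a (N - 2 * a)"
      using D_CNA_admissible[OF a(1)] by simp_all
    fix M1 M2 mu assume "admissible N (M1, M2, mu)"
    then show "Max (symNA M1 M2 mu) \<le> Max (symNA a (N - 2 * a) a)"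
      using admissible_aperture_bound a_max D_CNA_admissible(2)[OF a(1)] by fastforce
  qed
qed

end
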